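(* Let $A$ and $B$ be disjoint cubic graphs with $v(A)\equiv 0\pmod 6$ and $v(B)\equiv 4\pmod 6$, let $a=a_1a_2\in E(A)$, $x\in V(B)$, and $b=b_1b_2\in E(B)$. Suppose $A$ has no $\Lambda$-factor containing $a$, and $B-x$ has no $\Lambda$-factor avoiding $b$ (so $x$ is not incident to $b$). Let $G=AabB$. Then $v(G)\equiv 4\pmod 6$ and $G-x$ has no $\Lambda$-factor.
   Context: Graphs are finite, undirected, without loops or multiple edges; $v(G)=|V(G)|$. For disjoint graphs $A,B$ with $a=a_1a_2\in E(A)$, $b=b_1b_2\in E(B)$, $AabB$ is obtained from $(A-a)\cup(B-b)$ (edge deletions) by adding the new edges $a_1b_1$ and $a_2b_2$. $G-x$ denotes deletion of the vertex $x$. A $\Lambda$-factor of a graph is a spanning subgraph each of whose components is a path on 3 vertices; it avoids an edge $e$ if $e$ is not one of its edges. *)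

theory Defs
  imports Main
begin

definition graph :: "'a set \<Rightarrow> 'a set set \<Rightarrow> bool" where
  "graph V E \<longleftrightarrow> finite V \<and> (\<forall>e\<in>E. \<exists>u v. e = {u, v} \<and> u \<noteq> v \<and> u \<in> V \<and> v \<in> V)"

definition degree :: "'a set set \<Rightarrow> 'a \<Rightarrow> nat" where
  "degree E v = card {e \<in> E. v \<in> e}"

definition cubic :: "'a set \<Rightarrow> 'a set set \<Rightarrow> bool" where
  "cubic V E \<longleftrightarrow> graph V E \<and> (\<forall>v\<in>V. degree E v = 3)"

definition del_vert_V :: "'a set \<Rightarrow> 'a \<Rightarrow> 'a set" where
  "del_vert_V V x = V - {x}"

definition del_vert_E :: "'a set set \<Rightarrow> 'a \<Rightarrow> 'a set set" where
  "del_vert_E E x = {e \<in> E. x \<notin> e}"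

definition join_V :: "'a set \<Rightarrow> 'a set \<Rightarrow> 'a set" where
  "join_V VA VB = VA \<union> VB"

definition join_E :: "'a set set \<Rightarrow> 'a \<Rightarrow> 'a \<Rightarrow> 'a set set \<Rightarrow> 'a \<Rightarrow> 'a \<Rightarrow> 'a set set" where
  "join_E EA a1 a2 EB b1 b2 =
     (EA - {{a1, a2}}) \<union> (EB - {{b1, b2}}) \<union> {{a1, b1}, {a2, b2}}"

definition comp :: "'a set set \<Rightarrow> 'a \<Rightarrow> 'a set" where
  "comp F v = {w. (v, w) \<in> {(x, y). {x, y} \<in> F}\<^sup>*}"

text \<open>A \<Lambda>-factor of (V,E): a spanning subgraph (V,F), F \<subseteq> E, each of whose components
  is a path on 3 vertices, i.e. a connected graph with 3 vertices and 2 edges.\<close>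
definition lambda_factor :: "'a set \<Rightarrow> 'a set set \<Rightarrow> 'a set set \<Rightarrow> bool" where
  "lambda_factor V E F \<longleftrightarrow> F \<subseteq> E \<and>
     (\<forall>v\<in>V. card (comp F v) = 3 \<and> card {e \<in> F. e \<subseteq> comp F v} = 2)"

end

theory Submission
  imports Defs
begin

text \<open>Suppose \<open>F\<close> were a \<open>\<Lambda>\<close>-factor of \<open>G - x\<close>. Its components are triples, so every union of
  components has size divisible by 3. If \<open>F\<close> uses neither new edge \<open>a\<^sub>1b\<^sub>1\<close>, \<open>a\<^sub>2b\<^sub>2\<close>, it restricts to a
  \<open>\<Lambda>\<close>-factor of \<open>B - x\<close> avoiding \<open>b\<close>. Otherwise \<open>A\<close> together with the components of the \<open>a\<^sub>i\<close>
  is a union of components; as \<open>3 | v(A)\<close>, the vertices these components have outside \<open>A\<close> number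
  a multiple of 3. Each such component has one or two of them, so both new edges are used and,
  up to symmetry, the component of \<open>a\<^sub>1\<close> meets \<open>A\<close> only in \<open>a\<^sub>1\<close> while that of \<open>a\<^sub>2\<close> is the path
  \<open>u a\<^sub>2 b\<^sub>2\<close> with \<open>u \<in> A\<close>. Replacing these two components by the path \<open>a\<^sub>1 a\<^sub>2 u\<close> gives a
  \<open>\<Lambda>\<close>-factor of \<open>A\<close> containing \<open>a\<close>.\<close>

text \<open>For a graph \<open>F\<close>, the edge-closed sets are exactly the unions of components of \<open>F\<close>.\<close>

definition edge_closed :: "'a set set \<Rightarrow> 'a set \<Rightarrow> bool" where
  "edge_closed F S \<longleftrightarrow> (\<forall>e\<in>F. e \<inter> S \<noteq> {} \<longrightarrow> e \<subseteq> S)"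

lemma edge_closedD: "edge_closed F S \<Longrightarrow> e \<in> F \<Longrightarrow> y \<in> e \<Longrightarrow> y \<in> S \<Longrightarrow> e \<subseteq> S"
  unfolding edge_closed_def by blast

lemma edge_closed_Diff: "edge_closed F S \<Longrightarrow> edge_closed F T \<Longrightarrow> edge_closed F (S - T)"
  unfolding edge_closed_def by blast

lemma graph_edgeE:
  assumes "graph V E" "e \<in> E"
  obtains p q where "e = {p, q}" "p \<noteq> q" "p \<in> V" "q \<in> V"
  using assms unfolding graph_def by blast

lemma graph_mono: "graph V E \<Longrightarrow> F \<subseteq> E \<Longrightarrow> graph V F"
  unfolding graph_def by blast

lemma graph_edge_subset: "graph V E \<Longrightarrow> e \<in> E \<Longrightarrow> e \<subseteq> V"
  by (auto elim: graph_edgeE)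

lemma graph_restrict: "graph V F \<Longrightarrow> finite S \<Longrightarrow> graph S {e \<in> F. e \<subseteq> S}"
  unfolding graph_def by (metis (no_types, lifting) insert_subset mem_Collect_eq)

lemma graph_path: "distinct [p, q, r] \<Longrightarrow> graph {p, q, r} {{p, q}, {q, r}}"
  unfolding graph_def by (simp; blast)

lemma graph_edge_ends: "graph W D \<Longrightarrow> {p, q} \<in> D \<Longrightarrow> p \<in> W \<and> q \<in> W \<and> p \<noteq> q"
  by (erule graph_edgeE) (auto simp: doubleton_eq_iff)

lemma edge_closed_graph: "graph V F \<Longrightarrow> edge_closed F V"
  unfolding edge_closed_def using graph_edge_subset by blast

lemma in_comp_self: "v \<in> comp F v"
  by (simp add: comp_def)

lemma comp_step: "p \<in> comp F v \<Longrightarrow> {p, q} \<in> F \<Longrightarrow> q \<in> comp F v"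
  unfolding comp_def by (auto intro: rtrancl_into_rtrancl)

lemma comp_neighbour: "{v, q} \<in> F \<Longrightarrow> q \<in> comp F v"
  by (rule comp_step[OF in_comp_self])

lemma comp_subset:
  assumes "v \<in> S" "edge_closed F S"
  shows "comp F v \<subseteq> S"
proof
  fix w assume "w \<in> comp F v"
  then have "(v, w) \<in> {(x, y). {x, y} \<in> F}\<^sup>*" by (simp add: comp_def)
  then show "w \<in> S"
    by induction (use assms in \<open>auto dest: edge_closedD\<close>)
qed

lemma comp_eq:
  assumes "w \<in> comp F v"
  shows "comp F w = comp F v"
proof -
  let ?R = "{(x, y). {x, y} \<in> F}"
  have "sym (?R\<^sup>*)" by (rule sym_rtrancl) (auto simp: sym_def insert_commute)
  moreover have "(v, w) \<in> ?R\<^sup>*" using assms by (simp add: comp_def)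
  ultimately have "(w, v) \<in> ?R\<^sup>*" by (meson symD)
  with \<open>(v, w) \<in> ?R\<^sup>*\<close> show ?thesis
    unfolding comp_def by (blast intro: rtrancl_trans)
qed

lemma comps_disjoint: "w \<notin> comp F v \<Longrightarrow> comp F w \<inter> comp F v = {}"
  using comp_eq in_comp_self by (metis disjoint_iff)

lemma edge_closed_comp:
  assumes "graph V F"
  shows "edge_closed F (comp F v)"
  unfolding edge_closed_def
proof (intro ballI impI)
  fix e assume "e \<in> F" "e \<inter> comp F v \<noteq> {}"
  moreover obtain p q where "e = {p, q}" using assms \<open>e \<in> F\<close> by (rule graph_edgeE)
  ultimately show "e \<subseteq> comp F v"
    using comp_step[of p F v q] comp_step[of q F v p] by (auto simp: insert_commute)
qed

lemma comp_restrict: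
  assumes "v \<in> S" "edge_closed F S"
  shows "comp {e \<in> F. e \<subseteq> S} v = comp F v"
proof
  show "comp {e \<in> F. e \<subseteq> S} v \<subseteq> comp F v"
    unfolding comp_def by (auto elim: rtrancl_mono[THEN subsetD, rotated])
next
  show "comp F v \<subseteq> comp {e \<in> F. e \<subseteq> S} v"
  proof
    fix w assume "w \<in> comp F v"
    then have "(v, w) \<in> {(x, y). {x, y} \<in> F}\<^sup>*" by (simp add: comp_def)
    then have "(v, w) \<in> {(x, y). {x, y} \<in> {e \<in> F. e \<subseteq> S}}\<^sup>* \<and> w \<in> S"
    proof induction
      case (step y z)
      then have "{y, z} \<subseteq> S" using assms(2) by (auto dest: edge_closedD)
      with step show ?case by (auto intro: rtrancl_into_rtrancl)
    qed (use assms(1) in simp)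
    then show "w \<in> comp {e \<in> F. e \<subseteq> S} v" by (simp add: comp_def)
  qed
qed

lemma lambda_factor_card_comp: "lambda_factor V E F \<Longrightarrow> v \<in> V \<Longrightarrow> card (comp F v) = 3"
  unfolding lambda_factor_def by blast

lemma lambda_factor_card_edges:
  "lambda_factor V E F \<Longrightarrow> v \<in> V \<Longrightarrow> card {e \<in> F. e \<subseteq> comp F v} = 2"
  unfolding lambda_factor_def by blast

lemma lambda_factor_dvd_card:
  assumes F: "lambda_factor V E F" and "W \<subseteq> V" "finite W" "edge_closed F W"
  shows "3 dvd card W"
proof -
  let ?C = "comp F ` W"
  have W: "\<Union>?C = W"
  proof
    show "\<Union>?C \<subseteq> W" using comp_subset[OF _ assms(4)] by (simp add: UN_least)
    show "W \<subseteq> \<Union>?C" using in_comp_self[of _ F] by blast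
  qed
  have "3 * card ?C = card (\<Union>?C)"
  proof (rule card_partition)
    show "finite ?C" using \<open>finite W\<close> by simp
    show "finite (\<Union>?C)" unfolding W by fact
    show "card c = 3" if "c \<in> ?C" for c
      using lambda_factor_card_comp[OF F] \<open>W \<subseteq> V\<close> that by blast
    show "c1 \<inter> c2 = {}" if c: "c1 \<in> ?C" "c2 \<in> ?C" "c1 \<noteq> c2" for c1 c2
    proof -
      obtain v1 v2 where "c1 = comp F v1" "c2 = comp F v2" using c(1,2) by blast
      then show ?thesis using comps_disjoint[of v1 F v2] comp_eq[of v1 F v2] c(3) by blast
    qed
  qed
  then show ?thesis unfolding W by (metis dvd_triv_left)
qed

lemma lambda_factor_restrict:
  assumes F: "lambda_factor V E F" and "S \<subseteq> V" "edge_closed F S" "{e \<in> F. e \<subseteq> S} \<subseteq> E'"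
  shows "lambda_factor S E' {e \<in> F. e \<subseteq> S}"
  unfolding lambda_factor_def
proof (intro conjI ballI)
  let ?F = "{e \<in> F. e \<subseteq> S}"
  fix v assume v: "v \<in> S"
  note eq = comp_restrict[OF v assms(3)]
  have "comp F v \<subseteq> S" by (rule comp_subset[OF v assms(3)])
  then have edges: "{e \<in> ?F. e \<subseteq> comp F v} = {e \<in> F. e \<subseteq> comp F v}"
    by blast
  have "v \<in> V" using v \<open>S \<subseteq> V\<close> by blast
  then show "card (comp ?F v) = 3" "card {e \<in> ?F. e \<subseteq> comp ?F v} = 2"
    by (simp_all only: edges eq lambda_factor_card_comp[OF F] lambda_factor_card_edges[OF F])
qed (fact assms(4))

lemma lambda_factor_Un_left:
  assumes "graph S F" "graph T G" "S \<inter> T = {}" and F: "lambda_factor S E F" and v: "v \<in> S"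
  shows "card (comp (F \<union> G) v) = 3 \<and> card {e \<in> F \<union> G. e \<subseteq> comp (F \<union> G) v} = 2"
proof -
  have G_outside: "e \<inter> S = {}" "\<not> e \<subseteq> S" if e: "e \<in> G" for e
  proof -
    obtain p q where "e = {p, q}" "p \<in> T" "q \<in> T" using assms(2) e by (rule graph_edgeE)
    then show "e \<inter> S = {}" "\<not> e \<subseteq> S" using assms(3) by auto
  qed
  have F_inside: "e \<subseteq> S" if "e \<in> F" for e
    using graph_edge_subset[OF assms(1) that] .
  have closed: "edge_closed (F \<union> G) S"
    unfolding edge_closed_def using F_inside G_outside by auto
  have "{e \<in> F \<union> G. e \<subseteq> S} = F"
    using F_inside G_outside by auto
  then have eq: "comp (F \<union> G) v = comp F v"
    using comp_restrict[OF v closed] by simp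
  have "comp F v \<subseteq> S"
    by (rule comp_subset[OF v edge_closed_graph[OF assms(1)]])
  then have edges: "{e \<in> F \<union> G. e \<subseteq> comp F v} = {e \<in> F. e \<subseteq> comp F v}"
    using G_outside(2) by (auto dest: subset_trans)
  show ?thesis
    by (simp only: eq edges lambda_factor_card_comp[OF F v] lambda_factor_card_edges[OF F v])
qed

lemma lambda_factor_Un:
  assumes "graph S F" "graph T G" "S \<inter> T = {}" "lambda_factor S E F" "lambda_factor T E G"
  shows "lambda_factor (S \<union> T) E (F \<union> G)"
  unfolding lambda_factor_def
proof (intro conjI ballI)
  show "F \<union> G \<subseteq> E" using assms(4,5) unfolding lambda_factor_def by blast
next
  fix v assume "v \<in> S \<union> T"
  moreover have "T \<inter> S = {}" "G \<union> F = F \<union> G" using assms(3) by auto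
  ultimately have "card (comp (F \<union> G) v) = 3 \<and> card {e \<in> F \<union> G. e \<subseteq> comp (F \<union> G) v} = 2"
    using lambda_factor_Un_left[OF assms(1-4)] lambda_factor_Un_left[OF assms(2,1) _ assms(5)]
    by (metis Un_iff)
  then show "card (comp (F \<union> G) v) = 3" "card {e \<in> F \<union> G. e \<subseteq> comp (F \<union> G) v} = 2"
    by simp_all
qed

lemma lambda_factor_path:
  assumes "distinct [p, q, r]" "{p, q} \<in> E" "{q, r} \<in> E"
  shows "lambda_factor {p, q, r} E {{p, q}, {q, r}}"
  unfolding lambda_factor_def
proof (intro conjI ballI)
  let ?P = "{{p, q}, {q, r}}"
  have "comp ?P q \<subseteq> {p, q, r}"
    by (rule comp_subset) (auto simp: edge_closed_def)
  moreover have "p \<in> comp ?P q" "r \<in> comp ?P q"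
    using comp_neighbour[of q p ?P] comp_neighbour[of q r ?P] by (auto simp: insert_commute)
  ultimately have comp_q: "comp ?P q = {p, q, r}"
    using in_comp_self[of q ?P] by blast
  fix v assume "v \<in> {p, q, r}"
  then have comp: "comp ?P v = {p, q, r}"
    using comp_eq[of v ?P q] comp_q by simp
  then show "card (comp ?P v) = 3" using assms(1) by simp
  have "{e \<in> ?P. e \<subseteq> comp ?P v} = ?P" by (auto simp: comp)
  moreover have "{p, q} \<noteq> {q, r}" using assms(1) by (auto simp: doubleton_eq_iff)
  ultimately show "card {e \<in> ?P. e \<subseteq> comp ?P v} = 2" by simp
qed (use assms in simp)

lemma join_E_swap: "join_E EA a2 a1 EB b2 b1 = join_E EA a1 a2 EB b1 b2"
  unfolding join_E_def by (simp add: insert_commute Un_commute)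

locale glued =
  fixes VA VB :: "'a set" and EA EB :: "'a set set" and a1 a2 b1 b2 x :: 'a
  assumes graph_A: "graph VA EA" and graph_B: "graph VB EB" and disjoint: "VA \<inter> VB = {}"
    and edge_a: "{a1, a2} \<in> EA" and edge_b: "{b1, b2} \<in> EB"
    and x_in_B: "x \<in> VB" and x_not_b: "x \<noteq> b1" "x \<noteq> b2"
begin

abbreviation V :: "'a set" where "V \<equiv> VA \<union> VB - {x}"

abbreviation E :: "'a set set" where "E \<equiv> del_vert_E (join_E EA a1 a2 EB b1 b2) x"

lemma ends_a: "a1 \<in> VA" "a2 \<in> VA" "a1 \<noteq> a2"
  using graph_edge_ends[OF graph_A edge_a] by blast+

lemma ends_b: "b1 \<in> VB" "b2 \<in> VB" "b1 \<noteq> b2"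
  using graph_edge_ends[OF graph_B edge_b] by blast+

lemma edge_E_cases:
  assumes "e \<in> E"
  shows "(e \<in> EA \<and> e \<subseteq> VA) \<or> (e \<in> EB \<and> e \<subseteq> VB - {x}) \<or> e = {a1, b1} \<or> e = {a2, b2}"
  using assms graph_edge_subset[OF graph_A] graph_edge_subset[OF graph_B]
  unfolding del_vert_E_def join_E_def by blast

lemma graph_G: "graph V E"
  unfolding graph_def
proof (intro conjI ballI)
  show "finite V" using graph_A graph_B unfolding graph_def by simp
next
  fix e assume e: "e \<in> E"
  have VA: "VA \<subseteq> V" using x_in_B disjoint by blast
  have ab: "a1 \<in> V" "a2 \<in> V" "b1 \<in> V" "b2 \<in> V" "a1 \<noteq> b1" "a2 \<noteq> b2"
    using ends_a ends_b disjoint x_in_B x_not_b by auto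
  from edge_E_cases[OF e] show "\<exists>p q. e = {p, q} \<and> p \<noteq> q \<and> p \<in> V \<and> q \<in> V"
  proof (elim disjE conjE)
    assume "e \<in> EA"
    with graph_A obtain p q where "e = {p, q}" "p \<noteq> q" "p \<in> VA" "q \<in> VA" by (rule graph_edgeE)
    with VA show ?thesis by blast
  next
    assume "e \<in> EB" "e \<subseteq> VB - {x}"
    from graph_B \<open>e \<in> EB\<close> obtain p q where "e = {p, q}" "p \<noteq> q" by (rule graph_edgeE)
    with \<open>e \<subseteq> VB - {x}\<close> show ?thesis by blast
  next
    assume "e = {a1, b1}"
    with ab show ?thesis by blast
  next
    assume "e = {a2, b2}"
    with ab show ?thesis by blast
  qed
qed

lemma edge_E_nonempty: "e \<in> E \<Longrightarrow> e \<noteq> {}"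
  using graph_G by (blast elim: graph_edgeE)

lemma edge_E_in_A: "e \<in> E \<Longrightarrow> e \<subseteq> VA \<Longrightarrow> e \<in> EA"
  using edge_E_cases[of e] edge_E_nonempty[of e] ends_b disjoint by blast

lemma edge_E_crossing:
  "e \<in> E \<Longrightarrow> p \<in> e \<Longrightarrow> q \<in> e \<Longrightarrow> p \<in> VA \<Longrightarrow> q \<in> VB \<Longrightarrow> e = {a1, b1} \<or> e = {a2, b2}"
  using edge_E_cases[of e] disjoint by blast

lemma edge_b_notin_E: "{b1, b2} \<notin> E"
  using ends_a ends_b disjoint graph_edge_subset[OF graph_A]
  unfolding del_vert_E_def join_E_def by (auto simp: doubleton_eq_iff)

end

locale glued_factor = glued +
  fixes F :: "'a set set"
  assumes factor: "lambda_factor V E F"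
begin

lemma F_sub_E: "F \<subseteq> E"
  using factor unfolding lambda_factor_def by blast

lemma graph_F: "graph V F"
  using graph_mono[OF graph_G F_sub_E] .

lemma comp_sub_V: "v \<in> V \<Longrightarrow> comp F v \<subseteq> V"
  by (rule comp_subset[OF _ edge_closed_graph[OF graph_F]])

lemma no_crossing_factor_B:
  assumes "{a1, b1} \<notin> F" "{a2, b2} \<notin> F"
  shows "\<exists>F'. lambda_factor (VB - {x}) (del_vert_E EB x) F' \<and> {b1, b2} \<notin> F'"
proof -
  let ?S = "VB - {x}"
  have cases: "(e \<in> EA \<and> e \<subseteq> VA) \<or> (e \<in> EB \<and> e \<subseteq> ?S)" if "e \<in> F" for e
    using edge_E_cases[of e] that F_sub_E assms by auto
  have "edge_closed F ?S"
    unfolding edge_closed_def using cases disjoint by auto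
  moreover have "{e \<in> F. e \<subseteq> ?S} \<subseteq> del_vert_E EB x"
  proof
    fix e assume e: "e \<in> {e \<in> F. e \<subseteq> ?S}"
    then have "e \<noteq> {}" using edge_E_nonempty F_sub_E by blast
    with e cases disjoint show "e \<in> del_vert_E EB x"
      unfolding del_vert_E_def by auto
  qed
  ultimately have "lambda_factor ?S (del_vert_E EB x) {e \<in> F. e \<subseteq> ?S}"
    by (intro lambda_factor_restrict[OF factor]) auto
  moreover have "{b1, b2} \<notin> {e \<in> F. e \<subseteq> ?S}"
    using edge_b_notin_E F_sub_E by blast
  ultimately show ?thesis by blast
qed

lemma edge_closed_A_comps:
  assumes "{a1, b1} \<in> F \<Longrightarrow> a1 \<in> P" "{a2, b2} \<in> F \<Longrightarrow> a2 \<in> P"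
  shows "edge_closed F (VA \<union> (\<Union>a\<in>P. comp F a))"
  unfolding edge_closed_def
proof (intro ballI impI)
  fix e assume e: "e \<in> F" "e \<inter> (VA \<union> (\<Union>a\<in>P. comp F a)) \<noteq> {}"
  have in_comp: "e \<subseteq> comp F a" if "y \<in> e" "y \<in> comp F a" for a y
    using edge_closedD[OF edge_closed_comp[OF graph_F] e(1) that] .
  show "e \<subseteq> VA \<union> (\<Union>a\<in>P. comp F a)"
  proof (cases "e \<inter> VA = {}")
    case True
    with e(2) obtain a y where "a \<in> P" "y \<in> e" "y \<in> comp F a" by blast
    with in_comp show ?thesis by blast
  next
    case False
    from edge_E_cases e(1) F_sub_E have
      "(e \<in> EA \<and> e \<subseteq> VA) \<or> (e \<in> EB \<and> e \<subseteq> VB - {x}) \<or> e = {a1, b1} \<or> e = {a2, b2}"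
      by blast
    then show ?thesis
    proof (elim disjE conjE)
      assume "e \<subseteq> VB - {x}"
      with False disjoint show ?thesis by auto
    next
      assume "e = {a1, b1}"
      with assms(1) e(1) in_comp[of a1 a1] in_comp_self[of a1 F] show ?thesis by auto
    next
      assume "e = {a2, b2}"
      with assms(2) e(1) in_comp[of a2 a2] in_comp_self[of a2 F] show ?thesis by auto
    qed auto
  qed
qed

lemma dvd_card_comps_outside_A:
  assumes "3 dvd card VA" "P \<subseteq> VA" "{a1, b1} \<in> F \<Longrightarrow> a1 \<in> P" "{a2, b2} \<in> F \<Longrightarrow> a2 \<in> P"
  shows "3 dvd card ((\<Union>a\<in>P. comp F a) - VA)"
proof -
  let ?U = "\<Union>a\<in>P. comp F a"
  have "VA \<subseteq> V" "finite V" using disjoint x_in_B graph_G unfolding graph_def by auto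
  with assms(2) have "VA \<union> ?U \<subseteq> V" using comp_sub_V by blast
  with \<open>finite V\<close> have fin: "finite (VA \<union> ?U)" by (rule finite_subset[rotated])
  have "3 dvd card (VA \<union> ?U)"
    using lambda_factor_dvd_card[OF factor \<open>VA \<union> ?U \<subseteq> V\<close> fin]
      edge_closed_A_comps[OF assms(3,4)] by blast
  moreover have "card (VA \<union> ?U) = card VA + card (?U - VA)"
    using fin by (subst card_Un_disjoint[symmetric]) (auto intro: arg_cong[where f = card])
  ultimately show ?thesis using assms(1) by (simp add: dvd_add_right_iff)
qed

lemma card_comp_A: "a \<in> VA \<Longrightarrow> card (comp F a) = 3"
  using lambda_factor_card_comp[OF factor] disjoint x_in_B by auto

lemma finite_comp_A: "a \<in> VA \<Longrightarrow> finite (comp F a)"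
  using card_comp_A card.infinite by fastforce

lemma card_comp_outside_A_le_2:
  assumes "a \<in> VA"
  shows "card (comp F a - VA) \<le> 2"
proof -
  have "card (comp F a - {a}) = 2"
    using card_comp_A[OF assms] finite_comp_A[OF assms] in_comp_self[of a F] by simp
  moreover have "comp F a - VA \<subseteq> comp F a - {a}" using assms by blast
  ultimately show ?thesis using finite_comp_A[OF assms] by (metis card_mono finite_Diff)
qed

lemma crossing_in_comp:
  "{a1, b1} \<in> F \<Longrightarrow> b1 \<in> comp F a1 - VA" "{a2, b2} \<in> F \<Longrightarrow> b2 \<in> comp F a2 - VA"
  using comp_neighbour[of a1 b1 F] comp_neighbour[of a2 b2 F]
    ends_b(1,2) disjoint by auto

lemma card_comp_outside_A_pos: "a \<in> VA \<Longrightarrow> b \<in> comp F a - VA \<Longrightarrow> 0 < card (comp F a - VA)"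
  using finite_comp_A by (auto simp: card_gt_0_iff)

lemma one_crossing_impossible:
  assumes "3 dvd card VA" "{a1, b1} \<in> F" "{a2, b2} \<notin> F"
  shows False
proof -
  have "3 dvd card (comp F a1 - VA)"
    using dvd_card_comps_outside_A[OF assms(1), of "{a1}"] ends_a assms(3) by simp
  moreover have "0 < card (comp F a1 - VA)" "card (comp F a1 - VA) \<le> 2"
    using card_comp_outside_A_pos crossing_in_comp(1)[OF assms(2)] card_comp_outside_A_le_2
      ends_a by blast+
  ultimately show False by (auto dest: dvd_imp_le)
qed

lemma two_crossings_comps_disjoint:
  assumes "{a1, b1} \<in> F" "{a2, b2} \<in> F"
  shows "comp F a1 \<inter> comp F a2 = {}"
proof (rule ccontr)
  assume "comp F a1 \<inter> comp F a2 \<noteq> {}"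
  then have "a2 \<in> comp F a1" using comps_disjoint[of a2 F a1] by blast
  then have "comp F a2 = comp F a1" by (rule comp_eq)
  then have "{a1, a2, b1, b2} \<subseteq> comp F a1"
    using crossing_in_comp(1)[OF assms(1)] crossing_in_comp(2)[OF assms(2)] in_comp_self[of a1 F]
      in_comp_self[of a2 F] by auto
  then have "card {a1, a2, b1, b2} \<le> 3"
    using card_mono[OF finite_comp_A] card_comp_A ends_a by metis
  moreover have "a1 \<notin> {a2, b1, b2}" "a2 \<notin> {b1, b2}" "b1 \<noteq> b2"
    using ends_a ends_b disjoint by auto
  ultimately show False by simp
qed

lemma two_crossings_cards:
  assumes "3 dvd card VA" "{a1, b1} \<in> F" "{a2, b2} \<in> F"
  shows "card (comp F a1 - VA) + card (comp F a2 - VA) = 3"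
proof -
  have "(\<Union>a\<in>{a1, a2}. comp F a) - VA = (comp F a1 - VA) \<union> (comp F a2 - VA)" by auto
  moreover have "finite (comp F a1)" "finite (comp F a2)"
    using finite_comp_A ends_a by blast+
  moreover have "card ((comp F a1 - VA) \<union> (comp F a2 - VA))
      = card (comp F a1 - VA) + card (comp F a2 - VA)"
    using calculation(2,3) two_crossings_comps_disjoint[OF assms(2,3)]
    by (intro card_Un_disjoint) auto
  ultimately have "3 dvd card (comp F a1 - VA) + card (comp F a2 - VA)"
    using dvd_card_comps_outside_A[OF assms(1), of "{a1, a2}"] ends_a by simp
  moreover have "0 < card (comp F a1 - VA)" "card (comp F a1 - VA) \<le> 2"
    "0 < card (comp F a2 - VA)" "card (comp F a2 - VA) \<le> 2"
    using card_comp_outside_A_pos crossing_in_comp(1)[OF assms(2)] crossing_in_comp(2)[OF assms(3)]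
      card_comp_outside_A_le_2 ends_a by blast+
  ultimately show ?thesis by presburger
qed

lemma comp_inter_A_eq_singleton:
  assumes "a \<in> VA" "card (comp F a - VA) = 2"
  shows "comp F a \<inter> VA = {a}"
proof -
  have "comp F a - VA \<subseteq> comp F a - {a}" using assms(1) by blast
  moreover have "card (comp F a - {a}) = 2"
    using card_comp_A[OF assms(1)] finite_comp_A[OF assms(1)] in_comp_self[of a F] by simp
  ultimately have "comp F a - VA = comp F a - {a}"
    using assms(2) finite_comp_A[OF assms(1)] by (metis card_subset_eq finite_Diff)
  then show ?thesis using in_comp_self[of a F] assms(1) by blast
qed

lemma comp_a2_eq_path:
  assumes "{a2, b2} \<in> F" "card (comp F a2 - VA) = 1"
  obtains u where "comp F a2 = {a2, u, b2}" "u \<in> VA" "u \<noteq> a2"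
proof -
  let ?C = "comp F a2"
  have outside: "?C - VA = {b2}"
    using assms(2) crossing_in_comp(2)[OF assms(1)] by (metis card_1_singletonE singletonD)
  have "a2 \<noteq> b2" using ends_a ends_b disjoint by blast
  then have "{a2, b2} \<subseteq> ?C" "card {a2, b2} = 2"
    using in_comp_self[of a2 F] crossing_in_comp(2)[OF assms(1)] by auto
  then have "card (?C - {a2, b2}) = 1"
    using card_comp_A[OF ends_a(2)] finite_comp_A[OF ends_a(2)] by (simp add: card_Diff_subset)
  then obtain u where u: "?C - {a2, b2} = {u}" by (rule card_1_singletonE)
  show thesis
  proof
    show "?C = {a2, u, b2}" using u \<open>{a2, b2} \<subseteq> ?C\<close> by blast
    show "u \<in> VA" "u \<noteq> a2" using u outside by blast+
  qed
qed

lemma edge_a2_u_in_factor: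
  assumes "comp F a2 = {a2, u, b2}" "u \<in> VA" "u \<noteq> a2"
  shows "{a2, u} \<in> F"
proof (rule ccontr)
  assume no_edge: "{a2, u} \<notin> F"
  have "{e \<in> F. e \<subseteq> comp F a2} \<subseteq> {{a2, b2}}"
  proof
    fix e assume "e \<in> {e \<in> F. e \<subseteq> comp F a2}"
    then have e: "e \<in> F" "e \<subseteq> {a2, u, b2}" using assms(1) by auto
    obtain p q where pq: "e = {p, q}" "p \<noteq> q" using graph_F e(1) by (rule graph_edgeE)
    have "e \<noteq> {u, b2}"
    proof
      assume "e = {u, b2}"
      then have "e = {a1, b1} \<or> e = {a2, b2}"
        using edge_E_crossing[of e u b2] e(1) F_sub_E assms(2) ends_b by blast
      with \<open>e = {u, b2}\<close> show False
        using assms(3) ends_a ends_b disjoint by (auto simp: doubleton_eq_iff)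
    qed
    with pq e no_edge show "e \<in> {{a2, b2}}" by (auto simp: insert_commute)
  qed
  then have "card {e \<in> F. e \<subseteq> comp F a2} \<le> 1"
    using card_mono[of "{{a2, b2}}"] by fastforce
  moreover have "card {e \<in> F. e \<subseteq> comp F a2} = 2"
    using lambda_factor_card_edges[OF factor] ends_a disjoint x_in_B by auto
  ultimately show False by simp
qed

lemma two_crossings_factor_A:
  assumes "{a1, b1} \<in> F" "{a2, b2} \<in> F"
    and "card (comp F a1 - VA) = 2" "card (comp F a2 - VA) = 1"
  shows "\<exists>F'. lambda_factor VA EA F' \<and> {a1, a2} \<in> F'"
proof -
  obtain u where C2: "comp F a2 = {a2, u, b2}" and u: "u \<in> VA" "u \<noteq> a2"
    using comp_a2_eq_path[OF assms(2,4)] .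
  have C1: "comp F a1 \<inter> VA = {a1}"
    using comp_inter_A_eq_singleton[OF ends_a(1) assms(3)] .
  have "u \<noteq> a1"
    using C2 two_crossings_comps_disjoint[OF assms(1,2)] in_comp_self[of a1 F] by blast
  let ?T = "{a1, a2, u}" and ?P = "{{a1, a2}, {a2, u}}"
  let ?S = "VA - ?T"
  let ?F = "{e \<in> F. e \<subseteq> ?S}"
  have "?S = (VA \<union> (\<Union>a\<in>{a1, a2}. comp F a)) - comp F a1 - comp F a2"
    using C1 C2 ends_b disjoint by auto
  then have closed: "edge_closed F ?S"
    by (simp only:) (intro edge_closed_Diff edge_closed_A_comps edge_closed_comp[OF graph_F]; simp)
  have "?S \<subseteq> V" using disjoint x_in_B by auto
  moreover have "?F \<subseteq> EA" using edge_E_in_A F_sub_E by auto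
  ultimately have factor_S: "lambda_factor ?S EA ?F"
    using lambda_factor_restrict[OF factor _ closed] by blast
  have "{a2, u} \<in> EA"
    using edge_E_in_A edge_a2_u_in_factor[OF C2 u] F_sub_E ends_a u by auto
  then have factor_T: "lambda_factor ?T EA ?P"
    using lambda_factor_path[of a1 a2 u] edge_a ends_a u \<open>u \<noteq> a1\<close> by auto
  have "finite ?S" using graph_A unfolding graph_def by simp
  then have "graph ?S ?F" by (rule graph_restrict[OF graph_F])
  moreover have "graph ?T ?P"
    using graph_path[of a1 a2 u] ends_a u \<open>u \<noteq> a1\<close> by auto
  ultimately have "lambda_factor (?S \<union> ?T) EA (?F \<union> ?P)"
    using lambda_factor_Un factor_S factor_T by blast
  moreover have "?S \<union> ?T = VA" using ends_a u by auto
  ultimately show ?thesis by auto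
qed

end

lemma (in glued) no_lambda_factor:
  assumes "3 dvd card VA"
    and no_A: "\<not> (\<exists>F. lambda_factor VA EA F \<and> {a1, a2} \<in> F)"
    and no_B: "\<not> (\<exists>F. lambda_factor (VB - {x}) (del_vert_E EB x) F \<and> {b1, b2} \<notin> F)"
  shows "\<not> lambda_factor V E F"
proof
  assume factor: "lambda_factor V E F"
  interpret fac: glued_factor VA VB EA EB a1 a2 b1 b2 x F
    using glued_axioms factor by (simp add: glued_factor_def glued_factor_axioms_def)
  interpret swapped: glued_factor VA VB EA EB a2 a1 b2 b1 x F
    using glued_axioms factor
    by (simp add: glued_factor_def glued_factor_axioms_def glued_def join_E_swap insert_commute)
  consider "{a1, b1} \<notin> F" "{a2, b2} \<notin> F" | "{a1, b1} \<in> F" "{a2, b2} \<notin> F"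
    | "{a1, b1} \<notin> F" "{a2, b2} \<in> F" | "{a1, b1} \<in> F" "{a2, b2} \<in> F" by blast
  then show False
  proof cases
    case 1
    then show False using fac.no_crossing_factor_B no_B by blast
  next
    case 2
    then show False using fac.one_crossing_impossible assms(1) by blast
  next
    case 3
    then show False using swapped.one_crossing_impossible assms(1) by blast
  next
    case 4
    have "0 < card (comp F a1 - VA)" "0 < card (comp F a2 - VA)"
      using fac.card_comp_outside_A_pos fac.crossing_in_comp 4 ends_a by blast+
    then have "card (comp F a1 - VA) = 2 \<and> card (comp F a2 - VA) = 1
        \<or> card (comp F a2 - VA) = 2 \<and> card (comp F a1 - VA) = 1"
      using fac.two_crossings_cards[OF assms(1) 4] by linarith
    then show False
      using fac.two_crossings_factor_A swapped.two_crossings_factor_A 4 no_A by (auto simp: insert_commute)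
  qed
qed

theorem mainTheorem11:
  fixes VA VB :: "'a set" and EA EB :: "'a set set" and a1 a2 b1 b2 x :: 'a
  assumes "cubic VA EA" and "cubic VB EB" and "VA \<inter> VB = {}"
    and "card VA mod 6 = 0" and "card VB mod 6 = 4"
    and "{a1, a2} \<in> EA" and "x \<in> VB" and "{b1, b2} \<in> EB"
    and "\<not> (\<exists>F. lambda_factor VA EA F \<and> {a1, a2} \<in> F)"
    and "{b1, b2} \<in> del_vert_E EB x"
    and "\<not> (\<exists>F. lambda_factor (del_vert_V VB x) (del_vert_E EB x) F \<and> {b1, b2} \<notin> F)"
  shows "card (join_V VA VB) mod 6 = 4 \<and>
         \<not> (\<exists>F. lambda_factor (del_vert_V (join_V VA VB) x)
                  (del_vert_E (join_E EA a1 a2 EB b1 b2) x) F)"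
proof
  have graphs: "graph VA EA" "graph VB EB" using assms(1,2) unfolding cubic_def by blast+
  then have "card (join_V VA VB) = card VA + card VB"
    using assms(3) unfolding join_V_def graph_def by (simp add: card_Un_disjoint)
  then show "card (join_V VA VB) mod 6 = 4" using assms(4,5) by presburger
  have "x \<noteq> b1" "x \<noteq> b2" using assms(10) unfolding del_vert_E_def by auto
  then interpret glued VA VB EA EB a1 a2 b1 b2 x
    using graphs assms(3,6-8) by unfold_locales
  have "3 dvd card VA" using assms(4) by presburger
  then show "\<not> (\<exists>F. lambda_factor (del_vert_V (join_V VA VB) x)
                  (del_vert_E (join_E EA a1 a2 EB b1 b2) x) F)"
    using no_lambda_factor assms(9,11) unfolding del_vert_V_def join_V_def by blast
qed

end
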